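(* Let $n \in \mathbb{N}$ and let $y \in L^2([0,1]^n)$. Suppose $x^\dagger \in L^2([0,1]^n)$ satisfies $[x^\dagger * x^\dagger](s) = y(s)$ for almost every $s \in [0,1]^n$, and suppose $0 \notin \mathrm{supp}(x^\dagger)$, i.e. there exists $r>0$ such that $x^\dagger(t) = 0$ for almost every $t \in B_r(0) \cap [0,1]^n$. Then there exist infinitely many other functions $\hat{x} \in L^2([0,1]^n)$ (distinct from $x^\dagger$ and from one another) satisfying $[\hat{x} * \hat{x}](s) = y(s)$ for almost every $s \in [0,1]^n$.
   Context: All functions are real-valued. $L^2([0,1]^n)$ denotes the real functions in $L^2(\mathbb{R}^n)$ vanishing a.e. outside the unit cube $[0,1]^n$. The convolution is $[f*g](s) = \int_{\mathbb{R}^n} f(s-t)\,g(t)\,dt$, which for $f,g \in L^2([0,1]^n)$ and $s \in [0,1]^n$ equals $\int_{[0,s_1]\times\cdots\times[0,s_n]} f(s-t)g(t)\,dt$. $B_r(0)$ is the open Euclidean ball of radius $r$ about the origin; $\mathrm{supp}$ denotes the essential support with respect to Lebesgue measure. *)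

theory Defs
  imports "HOL-Analysis.Analysis"
begin

definition unit_cube :: "'a::euclidean_space set" where
  "unit_cube = cbox 0 One"

definition L2_cube :: "('a::euclidean_space \<Rightarrow> real) set" where
  "L2_cube = {f. f \<in> borel_measurable lebesgue \<and>
                  integrable lebesgue (\<lambda>t. (f t)\<^sup>2) \<and>
                  (AE t in lebesgue. t \<notin> unit_cube \<longrightarrow> f t = 0)}"

definition conv :: "('a::euclidean_space \<Rightarrow> real) \<Rightarrow> ('a \<Rightarrow> real) \<Rightarrow> 'a \<Rightarrow> real" where
  "conv f g s = (\<integral>t. f (s - t) * g t \<partial>lebesgue)"

end

(* Perturb the solution xd by multiples of the indicator of a small box A at the far corner
   One of the cube.  For s in the cube the coordinate sums of s - t and t add up to that of s,
   which is at most n.  Points of A have coordinate sum close to n, and points of the cube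
   outside ball 0 r have coordinate sum at least |t|^2 >= r^2.  Hence s - t and t never lie
   both in A, nor one in A and the other in the support of xd: all cross terms of the
   self-convolution vanish on the cube, so every perturbation is again a solution. *)

theory Submission
  imports Defs
begin

lemma AE_lebesgue_reflect:
  fixes s :: "'a::euclidean_space"
  assumes "AE t in lebesgue. P t"
  shows "AE t in lebesgue. P (s - t)"
proof -
  obtain N where N: "N \<in> null_sets lebesgue" "{t \<in> space lebesgue. \<not> P t} \<subseteq> N"
    using assms unfolding eventually_ae_filter by auto
  have "negligible ((\<lambda>t. s - t) ` N)"
    using N(1) by (intro negligible_differentiable_image_negligible)
      (auto simp: negligible_iff_null_sets)
  moreover have "{t. \<not> P (s - t)} \<subseteq> (\<lambda>t. s - t) ` N"
  proof
    fix t assume "t \<in> {t. \<not> P (s - t)}"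
    then have "s - t \<in> N" using N(2) by auto
    then show "t \<in> (\<lambda>t. s - t) ` N" by (rule image_eqI[rotated]) simp
  qed
  ultimately show ?thesis
    by (intro AE_I'[of "(\<lambda>t. s - t) ` N"]) (auto simp: negligible_iff_null_sets)
qed

lemma integral_cong_AE_lebesgue:
  fixes f g :: "'a::euclidean_space \<Rightarrow> 'b::euclidean_space"
  assumes "AE t in lebesgue. f t = g t"
  shows "integral\<^sup>L lebesgue f = integral\<^sup>L lebesgue g"
proof (cases "f \<in> borel_measurable lebesgue")
  case True
  then show ?thesis
    using assms borel_measurable_AE integral_cong_AE by blast
next
  case False
  have "AE t in lebesgue. g t = f t" using assms by auto
  then have "g \<notin> borel_measurable lebesgue" using borel_measurable_AE False by blast
  then show ?thesis using False
    by (metis borel_measurable_integrable not_integrable_integral_eq)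
qed

lemma conv_add_self_eq:
  assumes "AE t in lebesgue. f (s - t) * g t = 0 \<and> g (s - t) * f t = 0 \<and> g (s - t) * g t = 0"
  shows "conv (\<lambda>t. f t + g t) (\<lambda>t. f t + g t) s = conv f f s"
proof -
  have "AE t in lebesgue. (f (s - t) + g (s - t)) * (f t + g t) = f (s - t) * f t"
    using assms by eventually_elim (auto simp: distrib_left distrib_right)
  then show ?thesis
    unfolding conv_def by (rule integral_cong_AE_lebesgue)
qed

lemma L2_cube_add:
  assumes f: "f \<in> L2_cube" and g: "g \<in> L2_cube"
  shows "(\<lambda>t. f t + g t) \<in> L2_cube"
proof -
  have [measurable]: "f \<in> borel_measurable lebesgue" "g \<in> borel_measurable lebesgue"
    using f g by (auto simp: L2_cube_def)
  have "integrable lebesgue (\<lambda>t. 2 * (f t)\<^sup>2 + 2 * (g t)\<^sup>2)"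
    using f g by (auto simp: L2_cube_def)
  then have "integrable lebesgue (\<lambda>t. (f t + g t)\<^sup>2)"
  proof (rule Bochner_Integration.integrable_bound)
    show "AE t in lebesgue. norm ((f t + g t)\<^sup>2) \<le> norm (2 * (f t)\<^sup>2 + 2 * (g t)\<^sup>2)"
    proof (rule AE_I2)
      fix t
      have "0 \<le> (f t - g t)\<^sup>2" by simp
      then have "(f t + g t)\<^sup>2 \<le> 2 * (f t)\<^sup>2 + 2 * (g t)\<^sup>2"
        by (simp add: power2_sum power2_diff)
      then show "norm ((f t + g t)\<^sup>2) \<le> norm (2 * (f t)\<^sup>2 + 2 * (g t)\<^sup>2)"
        by simp
    qed
  qed simp
  moreover have "AE t in lebesgue. t \<notin> unit_cube \<longrightarrow> f t + g t = 0"
    using f g unfolding L2_cube_def by (auto elim: AE_mp)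
  ultimately show ?thesis
    by (simp add: L2_cube_def)
qed

lemma scaled_indicator_in_L2_cube:
  assumes A: "A \<in> sets lebesgue" "A \<subseteq> unit_cube"
  shows "(\<lambda>t. a * indicator A t) \<in> L2_cube"
proof -
  have "emeasure lebesgue A \<le> emeasure lebesgue (unit_cube :: 'a set)"
    using A by (intro emeasure_mono) (auto simp: unit_cube_def)
  then have "emeasure lebesgue A < \<infinity>"
    by (auto simp: unit_cube_def emeasure_lborel_cbox_finite intro: le_less_trans)
  then have "integrable lebesgue (\<lambda>t. a\<^sup>2 * indicator A t :: real)"
    using A by (intro integrable_mult_right integrable_real_indicator)
  moreover have "(a * indicator A t)\<^sup>2 = a\<^sup>2 * indicator A t" for t :: 'a
    by (simp add: indicator_def)
  ultimately have "integrable lebesgue (\<lambda>t. (a * indicator A t)\<^sup>2 :: real)"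
    by simp
  with A show ?thesis
    by (auto simp: L2_cube_def indicator_def)
qed

lemma not_AE_eq_add_indicator:
  fixes f :: "'a \<Rightarrow> real"
  assumes "A \<in> sets M" "emeasure M A \<noteq> 0" "a \<noteq> b"
  shows "\<not> (AE t in M. f t + a * indicator A t = f t + b * indicator A t)"
proof
  assume "AE t in M. f t + a * indicator A t = f t + b * indicator A t"
  then have "AE t in M. t \<notin> A"
    by eventually_elim (use \<open>a \<noteq> b\<close> in \<open>auto simp: indicator_def\<close>)
  with assms(1,2) show False
    by (metis AE_iff_null_sets null_setsD1)
qed

lemma add_indicator_family_AE_distinct:
  fixes f :: "'a \<Rightarrow> real"
  assumes A: "A \<in> sets M" "emeasure M A \<noteq> 0"
  defines "F \<equiv> range (\<lambda>k t. f t + real (Suc k) * indicator A t)"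
  shows "infinite F"
    and "g \<in> F \<Longrightarrow> \<not> (AE t in M. g t = f t)"
    and "g \<in> F \<Longrightarrow> h \<in> F \<Longrightarrow> g \<noteq> h \<Longrightarrow> \<not> (AE t in M. g t = h t)"
proof -
  obtain t0 where "t0 \<in> A"
    using A(2) by fastforce
  then have "inj (\<lambda>k t. f t + real (Suc k) * indicator A t)"
    by (intro injI) (drule fun_cong[where x = t0], simp)
  then show "infinite F"
    unfolding F_def using range_inj_infinite by blast
  show "\<not> (AE t in M. g t = f t)" if "g \<in> F"
  proof -
    obtain k where g: "g = (\<lambda>t. f t + real (Suc k) * indicator A t)"
      using \<open>g \<in> F\<close> by (auto simp: F_def)
    show ?thesis
      using not_AE_eq_add_indicator[OF A, where a = "real (Suc k)" and b = 0 and f = f]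
      by (simp add: g)
  qed
  show "\<not> (AE t in M. g t = h t)" if "g \<in> F" "h \<in> F" "g \<noteq> h"
  proof -
    obtain i j where g: "g = (\<lambda>t. f t + real (Suc i) * indicator A t)"
      and h: "h = (\<lambda>t. f t + real (Suc j) * indicator A t)"
      using \<open>g \<in> F\<close> \<open>h \<in> F\<close> by (auto simp: F_def)
    with \<open>g \<noteq> h\<close> have "i \<noteq> j" by auto
    then show ?thesis
      unfolding g h by (intro not_AE_eq_add_indicator[OF A]) simp
  qed
qed

definition corner_box :: "real \<Rightarrow> 'a::euclidean_space set" where
  "corner_box e = box ((1 - e) *\<^sub>R One) One"

lemma corner_box_subset_unit_cube:
  assumes "e \<le> 1"
  shows "corner_box e \<subseteq> unit_cube"
proof
  fix t :: 'a assume "t \<in> corner_box e"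
  then have "1 - e < t \<bullet> b \<and> t \<bullet> b < 1" if "b \<in> Basis" for b
    using that by (auto simp: corner_box_def mem_box)
  with assms show "t \<in> unit_cube"
    by (fastforce simp: unit_cube_def mem_box)
qed

lemma emeasure_corner_box:
  assumes "0 < e"
  shows "emeasure lebesgue (corner_box e :: 'a::euclidean_space set) = ennreal (e ^ DIM('a))"
  using assms by (simp add: corner_box_def emeasure_lborel_box inner_diff_left)

lemma inner_One_le_DIM:
  fixes s :: "'a::euclidean_space"
  assumes "s \<in> unit_cube"
  shows "s \<bullet> One \<le> DIM('a)"
proof -
  have "s \<bullet> One = (\<Sum>b\<in>Basis. s \<bullet> b)" by (simp add: inner_sum_right)
  also have "\<dots> \<le> (\<Sum>b\<in>(Basis::'a set). 1)"
    using assms by (intro sum_mono) (auto simp: unit_cube_def mem_box)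
  finally show ?thesis by simp
qed

lemma norm_power2_le_inner_One:
  fixes s :: "'a::euclidean_space"
  assumes "s \<in> unit_cube"
  shows "(norm s)\<^sup>2 \<le> s \<bullet> One"
proof -
  have "(norm s)\<^sup>2 = (\<Sum>b\<in>Basis. (s \<bullet> b) * (s \<bullet> b))"
    unfolding power2_norm_eq_inner by (rule euclidean_inner)
  also have "\<dots> \<le> (\<Sum>b\<in>Basis. s \<bullet> b)"
  proof (rule sum_mono)
    fix b :: 'a assume "b \<in> Basis"
    with assms have "0 \<le> s \<bullet> b" "s \<bullet> b \<le> 1" by (auto simp: unit_cube_def mem_box)
    then show "(s \<bullet> b) * (s \<bullet> b) \<le> s \<bullet> b" by (simp add: mult_left_le)
  qed
  also have "\<dots> = s \<bullet> One" by (simp add: inner_sum_right)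
  finally show ?thesis .
qed

lemma inner_One_corner_box:
  fixes t :: "'a::euclidean_space" and e :: real
  assumes "t \<in> corner_box e"
  shows "DIM('a) * (1 - e) < t \<bullet> One"
proof -
  have "(\<Sum>b\<in>(Basis::'a set). 1 - e) < (\<Sum>b\<in>Basis. t \<bullet> b)"
    using assms by (intro sum_strict_mono) (auto simp: corner_box_def mem_box)
  then show ?thesis by (simp add: inner_sum_right)
qed

lemma inner_One_diff_corner_box_less:
  fixes s t :: "'a::euclidean_space" and e :: real
  assumes "s \<in> unit_cube" "t \<in> corner_box e"
  shows "(s - t) \<bullet> One < DIM('a) * e"
  using inner_One_le_DIM[OF assms(1)] inner_One_corner_box[OF assms(2)]
  by (simp add: inner_diff_left algebra_simps)

lemma L2_cube_support_inner_One:
  assumes x: "x \<in> L2_cube" and "0 \<le> r"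
    and r: "AE t in lebesgue. t \<in> ball 0 r \<inter> unit_cube \<longrightarrow> x t = 0"
  shows "AE t in lebesgue. x t \<noteq> 0 \<longrightarrow> t \<in> unit_cube \<and> r\<^sup>2 \<le> t \<bullet> One"
  using r x[unfolded L2_cube_def, THEN CollectD, THEN conjunct2, THEN conjunct2]
proof eventually_elim
  case (elim t)
  with \<open>0 \<le> r\<close> have "x t \<noteq> 0 \<longrightarrow> t \<in> unit_cube \<and> r\<^sup>2 \<le> (norm t)\<^sup>2"
    by (auto simp: power_mono)
  then show ?case
    using norm_power2_le_inner_One[of t] by auto
qed

lemma conv_self_add_corner_indicator:
  fixes x :: "'a::euclidean_space \<Rightarrow> real" and e \<rho> :: real
  assumes supp: "AE t in lebesgue. x t \<noteq> 0 \<longrightarrow> t \<in> unit_cube \<and> \<rho> \<le> t \<bullet> One"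
    and e: "e \<le> 1/2" "DIM('a) * e \<le> \<rho>" and s: "s \<in> unit_cube"
  shows "conv (\<lambda>t. x t + a * indicator (corner_box e) t)
              (\<lambda>t. x t + a * indicator (corner_box e) t) s = conv x x s"
proof (rule conv_add_self_eq)
  let ?A = "corner_box e :: 'a set"
  have "DIM('a) * e \<le> DIM('a) * (1 - e)"
    using e(1) by (intro mult_left_mono) auto
  then have disjoint: "s - t \<notin> ?A" if "t \<in> ?A" for t
    using inner_One_diff_corner_box_less[OF s that] inner_One_corner_box[of "s - t" e]
    by linarith
  show "AE t in lebesgue. x (s - t) * (a * indicator ?A t) = 0
      \<and> a * indicator ?A (s - t) * x t = 0
      \<and> a * indicator ?A (s - t) * (a * indicator ?A t) = 0"
    using supp AE_lebesgue_reflect[OF supp, of s]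
  proof eventually_elim
    case (elim t)
    have "x (s - t) = 0" if "t \<in> ?A"
    proof (rule ccontr)
      assume "x (s - t) \<noteq> 0"
      with elim(2) have "\<rho> \<le> (s - t) \<bullet> One" by blast
      with inner_One_diff_corner_box_less[OF s that] e(2) show False by linarith
    qed
    moreover have "x t = 0" if "s - t \<in> ?A"
    proof (rule ccontr)
      assume "x t \<noteq> 0"
      with elim(1) have "\<rho> \<le> t \<bullet> One" by blast
      with inner_One_diff_corner_box_less[OF s that] e(2) show False by simp
    qed
    ultimately show ?case
      using disjoint by (cases "t \<in> ?A"; cases "s - t \<in> ?A") simp_all
  qed
qed

theorem theorem3p4:
  fixes y xd :: "'a::euclidean_space \<Rightarrow> real"
  assumes y: "y \<in> L2_cube"
    and xd: "xd \<in> L2_cube"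
    and sol: "AE s in lebesgue. s \<in> unit_cube \<longrightarrow> conv xd xd s = y s"
    and supp: "\<exists>r>0. AE t in lebesgue. t \<in> ball 0 r \<inter> unit_cube \<longrightarrow> xd t = 0"
  shows "\<exists>S. infinite S \<and> S \<subseteq> L2_cube
           \<and> (\<forall>xh\<in>S. AE s in lebesgue. s \<in> unit_cube \<longrightarrow> conv xh xh s = y s)
           \<and> (\<forall>xh\<in>S. \<not> (AE t in lebesgue. xh t = xd t))
           \<and> (\<forall>a\<in>S. \<forall>b\<in>S. a \<noteq> b \<longrightarrow> \<not> (AE t in lebesgue. a t = b t))"
proof -
  obtain r where "r > 0" and r: "AE t in lebesgue. t \<in> ball 0 r \<inter> unit_cube \<longrightarrow> xd t = 0"
    using supp by blast
  define e where "e = min (r\<^sup>2 / DIM('a)) (1/2)"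
  have e: "0 < e" "e \<le> 1/2" "DIM('a) * e \<le> r\<^sup>2"
    using \<open>r > 0\<close> by (auto simp: e_def min_def field_simps)
  have supp': "AE t in lebesgue. xd t \<noteq> 0 \<longrightarrow> t \<in> unit_cube \<and> r\<^sup>2 \<le> t \<bullet> One"
    using L2_cube_support_inner_One[OF xd _ r] \<open>r > 0\<close> by simp
  define A where "A = (corner_box e :: 'a set)"
  have A: "A \<in> sets lebesgue" "A \<subseteq> unit_cube" "emeasure lebesgue A \<noteq> 0"
    using e corner_box_subset_unit_cube[of e] emeasure_corner_box[OF e(1), where 'a='a]
    by (simp_all add: A_def corner_box_def)
  let ?S = "range (\<lambda>k t. xd t + real (Suc k) * indicator A t)"
  note family = add_indicator_family_AE_distinct[OF A(1,3), where f = xd]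
  show ?thesis
  proof (intro exI[of _ ?S] conjI ballI impI family)
    show "?S \<subseteq> L2_cube"
      using L2_cube_add[OF xd scaled_indicator_in_L2_cube[OF A(1,2)]] by auto
  next
    fix h assume "h \<in> ?S"
    then obtain a where h: "h = (\<lambda>t. xd t + a * indicator A t)" by blast
    show "AE s in lebesgue. s \<in> unit_cube \<longrightarrow> conv h h s = y s"
      using sol by eventually_elim
        (simp add: h A_def conv_self_add_corner_indicator[OF supp' e(2,3)])
  qed
qed

end
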